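(* Let $\Gamma$ be a Deza graph with parameters $(n,k,k-1,a)$, $k>1$, $\beta=1$. Let $x,y$ be $NA$-vertices with $C(x)\ne C(y)$. Then: (1) if some vertex of $\{x,x_b\}$ is adjacent to some vertex of $\{y,y_b\}$, or some vertex of $\{x',x_b'\}$ is adjacent to some vertex of $\{y',y_b'\}$, then all possible edges between $\{x,x_b\}$ and $\{y,y_b\}$ are present and all possible edges between $\{x',x_b'\}$ and $\{y',y_b'\}$ are present; (2) if some vertex of $\{x,x_b\}$ is adjacent to some vertex of $\{y',y_b'\}$, or some vertex of $\{x',x_b'\}$ is adjacent to some vertex of $\{y,y_b\}$, then all possible edges between $\{x,x_b\}$ and $\{y',y_b'\}$ are present and all possible edges between $\{x',x_b'\}$ and $\{y,y_b\}$ are present; (3) the number of edges between $C(x)$ and $C(y)$ is $0$, $8$ or $16$.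
   Context: A Deza graph with parameters $(n,k,b,a)$, $a\le b$, is a $k$-regular graph on $n$ vertices in which any two distinct vertices have $a$ or $b$ common neighbours; $\beta$ is the number of vertices $u\ne v$ with exactly $b$ common neighbours with a given vertex $v$. Since $\beta=1$, for each vertex $x$ let $x_b$ denote the unique vertex having $b=k-1$ common neighbours with $x$. A vertex $x$ is an $A$-vertex if $x$ is adjacent to $x_b$, and an $NA$-vertex otherwise. For an $NA$-vertex $x$, $x'$ denotes the unique neighbour of $x$ not adjacent to $x_b$, $x_b'=(x')_b=(x_b)'$, and $C(x)=\{x,x',x_b,x_b'\}$. *)

theory Defs
  imports Main
begin

definition simple_graph :: "'a set \<Rightarrow> ('a \<Rightarrow> 'a \<Rightarrow> bool) \<Rightarrow> bool" where
  "simple_graph V E \<longleftrightarrow> finite V \<and> (\<forall>x y. E x y \<longrightarrow> x \<in> V \<and> y \<in> V)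
     \<and> (\<forall>x y. E x y \<longrightarrow> E y x) \<and> (\<forall>x. \<not> E x x)"

definition nbhd :: "'a set \<Rightarrow> ('a \<Rightarrow> 'a \<Rightarrow> bool) \<Rightarrow> 'a \<Rightarrow> 'a set" where
  "nbhd V E x = {y \<in> V. E x y}"

definition common_nbrs :: "'a set \<Rightarrow> ('a \<Rightarrow> 'a \<Rightarrow> bool) \<Rightarrow> 'a \<Rightarrow> 'a \<Rightarrow> nat" where
  "common_nbrs V E x y = card (nbhd V E x \<inter> nbhd V E y)"

definition deza_graph :: "'a set \<Rightarrow> ('a \<Rightarrow> 'a \<Rightarrow> bool) \<Rightarrow> nat \<Rightarrow> nat \<Rightarrow> nat \<Rightarrow> nat \<Rightarrow> bool" where
  "deza_graph V E n k b a \<longleftrightarrow> simple_graph V E \<and> card V = n \<and> a \<le> b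
     \<and> (\<forall>v\<in>V. card (nbhd V E v) = k)
     \<and> (\<forall>u\<in>V. \<forall>v\<in>V. u \<noteq> v \<longrightarrow> common_nbrs V E u v = a \<or> common_nbrs V E u v = b)"

definition deza_beta :: "'a set \<Rightarrow> ('a \<Rightarrow> 'a \<Rightarrow> bool) \<Rightarrow> nat \<Rightarrow> 'a \<Rightarrow> nat" where
  "deza_beta V E b v = card {u \<in> V. u \<noteq> v \<and> common_nbrs V E v u = b}"

text \<open>x_b: the unique vertex having b common neighbours with x (when beta = 1).\<close>
definition vb :: "'a set \<Rightarrow> ('a \<Rightarrow> 'a \<Rightarrow> bool) \<Rightarrow> nat \<Rightarrow> 'a \<Rightarrow> 'a" where
  "vb V E b x = (THE u. u \<in> V \<and> u \<noteq> x \<and> common_nbrs V E x u = b)"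

definition A_vertex :: "'a set \<Rightarrow> ('a \<Rightarrow> 'a \<Rightarrow> bool) \<Rightarrow> nat \<Rightarrow> 'a \<Rightarrow> bool" where
  "A_vertex V E b x \<longleftrightarrow> E x (vb V E b x)"

definition NA_vertex :: "'a set \<Rightarrow> ('a \<Rightarrow> 'a \<Rightarrow> bool) \<Rightarrow> nat \<Rightarrow> 'a \<Rightarrow> bool" where
  "NA_vertex V E b x \<longleftrightarrow> x \<in> V \<and> \<not> E x (vb V E b x)"

definition vprime :: "'a set \<Rightarrow> ('a \<Rightarrow> 'a \<Rightarrow> bool) \<Rightarrow> nat \<Rightarrow> 'a \<Rightarrow> 'a" where
  "vprime V E b x = (THE z. z \<in> V \<and> E x z \<and> \<not> E z (vb V E b x))"

definition Cset :: "'a set \<Rightarrow> ('a \<Rightarrow> 'a \<Rightarrow> bool) \<Rightarrow> nat \<Rightarrow> 'a \<Rightarrow> 'a set" where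
  "Cset V E b x = {x, vprime V E b x, vb V E b x, vb V E b (vprime V E b x)}"

definition all_edges :: "('a \<Rightarrow> 'a \<Rightarrow> bool) \<Rightarrow> 'a set \<Rightarrow> 'a set \<Rightarrow> bool" where
  "all_edges E S T \<longleftrightarrow> (\<forall>u\<in>S. \<forall>w\<in>T. E u w)"

definition some_edge :: "('a \<Rightarrow> 'a \<Rightarrow> bool) \<Rightarrow> 'a set \<Rightarrow> 'a set \<Rightarrow> bool" where
  "some_edge E S T \<longleftrightarrow> (\<exists>u\<in>S. \<exists>w\<in>T. E u w)"

definition num_edges_between :: "('a \<Rightarrow> 'a \<Rightarrow> bool) \<Rightarrow> 'a set \<Rightarrow> 'a set \<Rightarrow> nat" where
  "num_edges_between E S T = card {{u, w} | u w. u \<in> S \<and> w \<in> T \<and> E u w}"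

end

theory Submission
  imports Defs "HOL-Library.Z2" "HOL-Library.Disjoint_Sets"
begin

text \<open>Twins x and x_b have the same neighbours except x' and x_b', and comparing their
  common neighbours with a third vertex shows that x' and x_b' have the same neighbours
  except x and x_b; moreover x' is again an NA-vertex, with twin x_b' and x'' = x.
  Hence adjacency between C(x) and C(y) is constant on each of the four blocks
  {x,x_b}\<times>{y,y_b}, {x',x_b'}\<times>{y',y_b'}, {x,x_b}\<times>{y',y_b'}
  and {x',x_b'}\<times>{y,y_b}. Opposite blocks agree by a parity argument: the twin map
  is a fixed-point-free involution on the common neighbours of x and y outside C(x) \<union> C(y),
  and a is even (the case y = x'), so x \<sim> y' if and only if y \<sim> x'.\<close>

lemma even_card_if_involution:
  assumes "\<And>x. x \<in> X \<Longrightarrow> h x \<in> X" "\<And>x. x \<in> X \<Longrightarrow> h (h x) = x" "\<And>x. x \<in> X \<Longrightarrow> h x \<noteq> x"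
  shows "even (card X)"
proof -
  have "(\<Sum>x\<in>X. 1 :: bit) = 0"
    by (rule sum_involution_eq_0[where h = h]) (use assms in auto)
  then show ?thesis
    by (metis sum_constant mult_1_right even_of_nat even_zero)
qed

lemma num_edges_between_eq_card:
  assumes "A \<inter> B = {}"
  shows "num_edges_between E A B = card {(u, w). u \<in> A \<and> w \<in> B \<and> E u w}"
proof -
  let ?R = "{(u, w). u \<in> A \<and> w \<in> B \<and> E u w}"
  have "{{u, w} | u w. u \<in> A \<and> w \<in> B \<and> E u w} = (\<lambda>(u, w). {u, w}) ` ?R"
    by auto
  moreover have "inj_on (\<lambda>(u, w). {u, w}) ?R"
    using assms by (auto intro!: inj_onI simp: doubleton_eq_iff)
  ultimately show ?thesis
    unfolding num_edges_between_def by (simp add: card_image)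
qed

lemma card_Times_Un_Times:
  assumes "finite A" "finite B" "finite C" "finite D" "A \<inter> C = {}"
  shows "card (A \<times> B \<union> C \<times> D) = card A * card B + card C * card D"
proof -
  have "A \<times> B \<inter> C \<times> D = {}" using assms(5) by auto
  then show ?thesis using assms by (simp add: card_Un_disjoint card_cartesian_product)
qed

lemma num_edges_between_blocks:
  assumes disj: "(A \<union> C) \<inter> (B \<union> D) = {}" and AC: "A \<inter> C = {}" and BD: "B \<inter> D = {}"
    and card: "card A = 2" "card B = 2" "card C = 2" "card D = 2"
    and p: "\<forall>u\<in>A. \<forall>w\<in>B. E u w \<longleftrightarrow> p" "\<forall>u\<in>C. \<forall>w\<in>D. E u w \<longleftrightarrow> p"
    and q: "\<forall>u\<in>A. \<forall>w\<in>D. E u w \<longleftrightarrow> q" "\<forall>u\<in>C. \<forall>w\<in>B. E u w \<longleftrightarrow> q"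
  shows "num_edges_between E (A \<union> C) (B \<union> D) = 8 * (of_bool p + of_bool q)"
proof -
  let ?P = "A \<times> B \<union> C \<times> D" and ?Q = "A \<times> D \<union> C \<times> B"
  have fin: "finite A" "finite B" "finite C" "finite D"
    using card by (auto intro: card_ge_0_finite)
  have edges: "{(u, w). u \<in> A \<union> C \<and> w \<in> B \<union> D \<and> E u w}
      = (if p then ?P else {}) \<union> (if q then ?Q else {})"
    using p q by auto
  have "card ?P = 8" "card ?Q = 8"
    using card_Times_Un_Times[OF fin AC] card_Times_Un_Times[OF fin(1,4,3,2) AC] card
    by simp_all
  moreover have "?P \<inter> ?Q = {}" using AC BD by auto
  ultimately show ?thesis
    unfolding num_edges_between_eq_card[OF disj] edges using fin
    by (simp add: card_Un_disjoint)
qed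

lemma some_edge_imp_all_edges:
  assumes "\<forall>u\<in>A. \<forall>w\<in>B. E u w \<longleftrightarrow> p" "\<forall>u\<in>C. \<forall>w\<in>D. E u w \<longleftrightarrow> p"
  shows "some_edge E A B \<or> some_edge E C D \<longrightarrow> all_edges E A B \<and> all_edges E C D"
  using assms unfolding some_edge_def all_edges_def by blast

text \<open>The degree is written Suc b, so that b plays the role of k - 1 without truncated
  subtraction; the hypothesis k > 1 of the theorem is needed only to rewrite k as Suc (k - 1).\<close>

locale deza_beta_one =
  fixes V :: "'a set" and E :: "'a \<Rightarrow> 'a \<Rightarrow> bool" and n b a :: nat
  assumes deza: "deza_graph V E n (Suc b) b a"
    and beta_eq_1: "\<forall>v\<in>V. deza_beta V E b v = 1"
begin

abbreviation "N \<equiv> nbhd V E"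
abbreviation "twin \<equiv> vb V E b"
abbreviation "partner \<equiv> vprime V E b"
abbreviation "NA \<equiv> NA_vertex V E b"
abbreviation "C \<equiv> Cset V E b"

lemma finite_V: "finite V"
  and edge_in_V: "E u w \<Longrightarrow> u \<in> V \<and> w \<in> V"
  and edge_sym: "E u w \<longleftrightarrow> E w u"
  and edge_irrefl: "\<not> E u u"
  using deza unfolding deza_graph_def simple_graph_def by blast+

lemma mem_nbhd_iff: "w \<in> N u \<longleftrightarrow> E u w"
  unfolding nbhd_def using edge_in_V by auto

lemma finite_nbhd: "finite (N u)"
  unfolding nbhd_def using finite_V by simp

lemma card_nbhd: "u \<in> V \<Longrightarrow> card (N u) = Suc b"
  using deza unfolding deza_graph_def by blast

lemma common_nbrs_sym: "common_nbrs V E u v = common_nbrs V E v u"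
  unfolding common_nbrs_def by (simp add: Int_commute)

lemma twin_ex1:
  assumes "v \<in> V" shows "\<exists>!u. u \<in> V \<and> u \<noteq> v \<and> common_nbrs V E v u = b"
proof -
  have "card {u \<in> V. u \<noteq> v \<and> common_nbrs V E v u = b} = 1"
    using beta_eq_1 assms unfolding deza_beta_def by blast
  then obtain z where "{u \<in> V. u \<noteq> v \<and> common_nbrs V E v u = b} = {z}"
    by (rule card_1_singletonE)
  then show ?thesis by (metis (mono_tags, lifting) mem_Collect_eq singletonD singletonI)
qed

lemma
  assumes "v \<in> V"
  shows twin_in_V: "twin v \<in> V" and twin_neq: "twin v \<noteq> v"
    and common_nbrs_twin: "common_nbrs V E v (twin v) = b"
  using theI'[OF twin_ex1[OF assms]] unfolding vb_def by auto

lemma twin_unique: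
  assumes "v \<in> V" "u \<in> V" "u \<noteq> v" "common_nbrs V E v u = b"
  shows "twin v = u"
  using the1_equality[OF twin_ex1[OF assms(1)]] assms unfolding vb_def by blast

lemma twin_twin: "v \<in> V \<Longrightarrow> twin (twin v) = v"
  by (metis common_nbrs_sym common_nbrs_twin twin_in_V twin_unique)

lemma common_nbrs_eq_a:
  assumes "u \<in> V" "v \<in> V" "u \<noteq> v" "u \<noteq> twin v"
  shows "common_nbrs V E v u = a"
  using deza assms twin_unique[of v u] unfolding deza_graph_def by metis

lemma NA_in_V: "NA x \<Longrightarrow> x \<in> V"
  and NA_not_edge_twin: "NA x \<Longrightarrow> \<not> E x (twin x)"
  unfolding NA_vertex_def by blast+

lemma NA_twin: "NA x \<Longrightarrow> NA (twin x)"
  unfolding NA_vertex_def using twin_in_V twin_twin edge_sym by metis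

lemma nbhd_diff_nbhd_twin:
  assumes x: "NA x" shows "N x - N (twin x) = {partner x}"
proof -
  have xV: "x \<in> V" using NA_in_V[OF x] .
  have "card (N x - N (twin x)) = card (N x) - card (N x \<inter> N (twin x))"
    by (simp add: card_Diff_subset_Int finite_nbhd)
  also have "\<dots> = 1"
    using common_nbrs_twin[OF xV] card_nbhd[OF xV] unfolding common_nbrs_def by simp
  finally obtain z where z: "N x - N (twin x) = {z}"
    by (rule card_1_singletonE)
  then have "\<forall>u. (u \<in> V \<and> E x u \<and> \<not> E u (twin x)) \<longleftrightarrow> u = z"
    by (auto simp: set_eq_iff mem_nbhd_iff edge_sym dest: edge_in_V)
  then have "partner x = z"
    unfolding vprime_def by simp
  with z show ?thesis by simp
qed

lemma
  assumes "NA x"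
  shows partner_in_V: "partner x \<in> V" and edge_partner: "E x (partner x)"
    and not_edge_twin_partner: "\<not> E (twin x) (partner x)"
  using nbhd_diff_nbhd_twin[OF assms] edge_in_V by (auto simp: set_eq_iff mem_nbhd_iff)

lemma twin_edge_iff:
  assumes x: "NA x" and w: "w \<notin> {partner x, partner (twin x)}"
  shows "E (twin x) w \<longleftrightarrow> E x w"
proof -
  have "N x - N (twin x) = {partner x}" "N (twin x) - N x = {partner (twin x)}"
    using nbhd_diff_nbhd_twin[OF x] nbhd_diff_nbhd_twin[OF NA_twin[OF x]]
    unfolding twin_twin[OF NA_in_V[OF x]] .
  then show ?thesis using w by (auto simp: set_eq_iff mem_nbhd_iff)
qed

lemma partner_twin_edge_iff:
  assumes x: "NA x" and w: "w \<notin> {x, twin x}"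
  shows "E (partner (twin x)) w \<longleftrightarrow> E (partner x) w"
proof (cases "w \<in> V")
  case False
  then show ?thesis using edge_in_V by blast
next
  case wV: True
  have xV: "x \<in> V" using NA_in_V[OF x] .
  define D where "D = N x \<inter> N (twin x)"
  have Nx: "N x = insert (partner x) D" "partner x \<notin> D"
    using nbhd_diff_nbhd_twin[OF x] unfolding D_def by blast+
  have Ntx: "N (twin x) = insert (partner (twin x)) D" "partner (twin x) \<notin> D"
    using nbhd_diff_nbhd_twin[OF NA_twin[OF x]] unfolding D_def twin_twin[OF xV] by blast+
  have "finite D" unfolding D_def using finite_nbhd by simp
  then have card_insert: "card (insert p D \<inter> N w) = card (D \<inter> N w) + of_bool (E p w)"
    if "p \<notin> D" for p
    using that by (simp add: Int_insert_left card_insert_if mem_nbhd_iff edge_sym)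
  have "card (N x \<inter> N w) = a" "card (N (twin x) \<inter> N w) = a"
    using common_nbrs_eq_a[OF wV xV] common_nbrs_eq_a[OF wV twin_in_V[OF xV]] w
    unfolding common_nbrs_def twin_twin[OF xV] by auto
  then show ?thesis
    unfolding Nx(1) Ntx(1) card_insert[OF Nx(2)] card_insert[OF Ntx(2)]
    by (cases "E (partner x) w"; cases "E (partner (twin x)) w") simp_all
qed

lemma nbhd_partner_Int_nbhd_partner_twin:
  assumes x: "NA x"
  shows "N (partner x) \<inter> N (partner (twin x)) = N (partner x) - {x}"
proof -
  have "\<not> E x (partner (twin x))"
    using not_edge_twin_partner[OF NA_twin[OF x]] twin_twin[OF NA_in_V[OF x]] by simp
  moreover have "E (partner (twin x)) w" if "E (partner x) w" "w \<noteq> x" for w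
  proof -
    have "w \<noteq> twin x" using that not_edge_twin_partner[OF x] edge_sym by blast
    then show ?thesis using partner_twin_edge_iff[OF x] that by blast
  qed
  ultimately show ?thesis by (auto simp: mem_nbhd_iff edge_sym)
qed

lemma twin_partner:
  assumes x: "NA x" shows "twin (partner x) = partner (twin x)"
proof (rule twin_unique)
  show "partner x \<in> V" "partner (twin x) \<in> V"
    using partner_in_V x NA_twin by blast+
  show "partner (twin x) \<noteq> partner x"
    using not_edge_twin_partner[OF x] edge_partner[OF NA_twin[OF x]] by metis
  have "x \<in> N (partner x)" using edge_partner[OF x] by (simp add: mem_nbhd_iff edge_sym)
  then show "common_nbrs V E (partner x) (partner (twin x)) = b"
    unfolding common_nbrs_def nbhd_partner_Int_nbhd_partner_twin[OF x]
    by (simp add: finite_nbhd card_nbhd partner_in_V[OF x])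
qed

lemma NA_partner:
  assumes x: "NA x" shows "NA (partner x)"
proof -
  have "partner (twin x) \<noteq> x"
    using edge_partner[OF NA_twin[OF x]] NA_not_edge_twin[OF x] edge_sym by metis
  then have "\<not> E (partner x) (partner (twin x))"
    using nbhd_partner_Int_nbhd_partner_twin[OF x] edge_irrefl
    by (auto simp: set_eq_iff mem_nbhd_iff)
  then show ?thesis
    unfolding NA_vertex_def using partner_in_V[OF x] twin_partner[OF x] by simp
qed

lemma partner_partner:
  assumes x: "NA x" shows "partner (partner x) = x"
proof -
  have "x \<in> N (partner x) - N (twin (partner x))"
    using edge_partner[OF x] not_edge_twin_partner[OF NA_twin[OF x]]
    by (simp add: mem_nbhd_iff edge_sym twin_partner[OF x] twin_twin[OF NA_in_V[OF x]])
  then show ?thesis using nbhd_diff_nbhd_twin[OF NA_partner[OF x]] by auto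
qed

lemma not_edge_twin_of_partner: "NA x \<Longrightarrow> \<not> E x (twin (partner x))"
  using not_edge_twin_partner[OF NA_twin] twin_partner twin_twin NA_in_V by metis

lemma partner_notin_twin_pair: "NA x \<Longrightarrow> partner x \<notin> {x, twin x}"
  using edge_partner edge_irrefl NA_not_edge_twin by fastforce

lemma twin_pairs_partner_disjoint:
  assumes x: "NA x" shows "{x, twin x} \<inter> {partner x, twin (partner x)} = {}"
  using partner_notin_twin_pair[OF x] twin_twin[OF NA_in_V[OF x]]
    twin_twin[OF partner_in_V[OF x]] by auto

lemma Cset_eq: "C x = {x, twin x} \<union> {partner x, twin (partner x)}"
  unfolding Cset_def by auto

lemma Cset_partner: "NA x \<Longrightarrow> C (partner x) = C x"
  unfolding Cset_def by (auto simp: partner_partner twin_partner)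

lemma Cset_twin: "NA x \<Longrightarrow> C (twin x) = C x"
  unfolding Cset_def
  by (auto simp: twin_partner[symmetric] twin_twin NA_in_V partner_in_V NA_twin)

lemma Cset_eq_if_mem:
  assumes v: "NA v" and z: "z \<in> C v"
  shows "C z = C v"
proof -
  have "z = v \<or> z = twin v \<or> z = partner v \<or> z = twin (partner v)"
    using z unfolding Cset_eq by blast
  then show ?thesis
    using Cset_twin[OF v] Cset_partner[OF v] Cset_twin[OF NA_partner[OF v]] by metis
qed

lemma Cset_disjoint:
  assumes x: "NA x" and y: "NA y" and "C x \<noteq> C y"
  shows "C x \<inter> C y = {}"
proof (rule ccontr)
  assume "C x \<inter> C y \<noteq> {}"
  then obtain z where "z \<in> C x" "z \<in> C y" by blast
  then show False using Cset_eq_if_mem[OF x] Cset_eq_if_mem[OF y] assms(3) by metis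
qed

lemma twin_pair_edge_iff:
  assumes v: "NA v" and u: "u \<in> {v, twin v}" and w: "w \<notin> {partner v, twin (partner v)}"
  shows "E u w \<longleftrightarrow> E v w"
  using u w twin_edge_iff[OF v] twin_partner[OF v] by auto

lemma twin_pairs_edge_iff:
  assumes v: "NA v" and w: "NA w" and disj: "C v \<inter> C w = {}"
  shows "\<forall>u\<in>{v, twin v}. \<forall>z\<in>{w, twin w}. E u z \<longleftrightarrow> E v w"
proof (intro ballI)
  fix u z assume u: "u \<in> {v, twin v}" and z: "z \<in> {w, twin w}"
  have "z \<notin> {partner v, twin (partner v)}" "v \<notin> {partner w, twin (partner w)}"
    using disj z unfolding Cset_eq by auto
  then show "E u z \<longleftrightarrow> E v w"
    using twin_pair_edge_iff[OF v u] twin_pair_edge_iff[OF w z] edge_sym by metis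
qed

lemma A_vertex_twin_edge:
  assumes v: "v \<in> V" "E v (twin v)" and u: "E v u" "u \<noteq> twin v"
  shows "E (twin v) u"
proof -
  have "N v \<inter> N (twin v) \<subseteq> N v - {twin v}"
    by (auto simp: mem_nbhd_iff edge_irrefl)
  moreover have "card (N v \<inter> N (twin v)) = card (N v - {twin v})"
    using common_nbrs_twin[OF v(1)] card_nbhd[OF v(1)] v(2)
    unfolding common_nbrs_def by (simp add: mem_nbhd_iff)
  ultimately have "N v \<inter> N (twin v) = N v - {twin v}"
    by (simp add: card_subset_eq finite_nbhd)
  then show ?thesis using u by (auto simp: set_eq_iff mem_nbhd_iff)
qed

lemma edge_twin_if_edge:
  assumes u: "NA u" and uw: "E u w" and w: "w \<notin> {partner u, twin (partner u)}"
  shows "E u (twin w)"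
proof -
  have wV: "w \<in> V" using uw edge_in_V by blast
  have "u \<noteq> twin w"
    using uw NA_not_edge_twin[OF u] twin_twin[OF wV] by metis
  show ?thesis
  proof (cases "E w (twin w)")
    case True
    then show ?thesis
      using A_vertex_twin_edge[OF wV True] uw \<open>u \<noteq> twin w\<close> edge_sym by blast
  next
    case False
    then have w_NA: "NA w" unfolding NA_vertex_def using wV by simp
    have "u \<noteq> partner w" using w partner_partner[OF w_NA] by auto
    moreover have "u \<noteq> twin (partner w)"
      using w twin_twin[OF partner_in_V[OF w_NA]] partner_partner[OF w_NA] twin_partner[OF u]
      by auto
    ultimately show ?thesis
      using twin_pair_edge_iff[OF w_NA, of "twin w" u] uw edge_sym by auto
  qed
qed

lemma even_card_common_nbhd_diff_partners:
  assumes x: "NA x" and y: "NA y"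
  shows "even (card (N x \<inter> N y - {partner x, twin (partner x), partner y, twin (partner y)}))"
    (is "even (card ?M)")
proof (rule even_card_if_involution[where h = twin])
  fix w assume w: "w \<in> ?M"
  then have wV: "w \<in> V" by (auto simp: mem_nbhd_iff dest: edge_in_V)
  show "twin w \<in> ?M"
    using w edge_twin_if_edge[OF x] edge_twin_if_edge[OF y] twin_twin[OF wV]
      twin_twin[OF partner_in_V[OF x]] twin_twin[OF partner_in_V[OF y]]
    by (auto simp: mem_nbhd_iff)
  show "twin (twin w) = w" using twin_twin[OF wV] .
  show "twin w \<noteq> w" using twin_neq[OF wV] .
qed

lemma even_a:
  assumes x: "NA x" shows "even a"
proof -
  have "N x \<inter> N (partner x) - {partner x, twin (partner x), partner (partner x),
      twin (partner (partner x))} = N x \<inter> N (partner x)"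
    using edge_irrefl NA_not_edge_twin[OF x] not_edge_twin_of_partner[OF x]
    by (auto simp: mem_nbhd_iff partner_partner[OF x])
  then have "even (card (N x \<inter> N (partner x)))"
    using even_card_common_nbhd_diff_partners[OF x NA_partner[OF x]] by simp
  moreover have "card (N x \<inter> N (partner x)) = a"
    using common_nbrs_eq_a[OF partner_in_V[OF x] NA_in_V[OF x]] partner_notin_twin_pair[OF x]
    unfolding common_nbrs_def by simp
  ultimately show ?thesis by simp
qed

lemma edge_partner_iff:
  assumes x: "NA x" and y: "NA y" and disj: "C x \<inter> C y = {}"
  shows "E y (partner x) \<longleftrightarrow> E x (partner y)"
proof -
  let ?S = "{partner x, twin (partner x), partner y, twin (partner y)}"
  have ne: "y \<noteq> x" "y \<noteq> twin x" "partner x \<noteq> partner y"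
    using disj unfolding Cset_def by auto
  have "N x \<inter> N y \<inter> ?S
      = (if E y (partner x) then {partner x} else {}) \<union> (if E x (partner y) then {partner y} else {})"
    using edge_partner[OF x] edge_partner[OF y]
      not_edge_twin_of_partner[OF x] not_edge_twin_of_partner[OF y]
    by (auto simp: mem_nbhd_iff)
  then have "card (N x \<inter> N y \<inter> ?S) = of_bool (E y (partner x)) + of_bool (E x (partner y))"
    using ne(3) by simp
  moreover have "card (N x \<inter> N y) = a"
    using common_nbrs_eq_a[OF NA_in_V[OF y] NA_in_V[OF x] ne(1,2)]
    unfolding common_nbrs_def by (simp add: Int_commute)
  ultimately have "card (N x \<inter> N y - ?S) + of_bool (E y (partner x)) + of_bool (E x (partner y)) = a"
    using card_Int_Diff[of "N x \<inter> N y" ?S] finite_nbhd by simp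
  then show ?thesis
    using even_card_common_nbhd_diff_partners[OF x y] even_a[OF x]
    by (cases "E y (partner x)"; cases "E x (partner y)") auto
qed

lemma edge_blocks:
  assumes x: "NA x" and y: "NA y" and Cne: "C x \<noteq> C y"
  defines "x' \<equiv> partner x" and "y' \<equiv> partner y"
  shows "\<forall>u\<in>{x, twin x}. \<forall>w\<in>{y, twin y}. E u w \<longleftrightarrow> E x y"
    and "\<forall>u\<in>{x', twin x'}. \<forall>w\<in>{y', twin y'}. E u w \<longleftrightarrow> E x y"
    and "\<forall>u\<in>{x, twin x}. \<forall>w\<in>{y', twin y'}. E u w \<longleftrightarrow> E x y'"
    and "\<forall>u\<in>{x', twin x'}. \<forall>w\<in>{y, twin y}. E u w \<longleftrightarrow> E x y'"
proof -
  have x': "NA x'" and y': "NA y'"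
    unfolding x'_def y'_def using NA_partner[OF x] NA_partner[OF y] .
  have disj: "C x \<inter> C y = {}"
    using Cset_disjoint[OF x y Cne] .
  then have disj': "C x' \<inter> C y' = {}" "C x \<inter> C y' = {}" "C x' \<inter> C y = {}"
    unfolding x'_def y'_def Cset_partner[OF x] Cset_partner[OF y] by simp_all
  have same: "E x' y' \<longleftrightarrow> E x y"
    using edge_partner_iff[OF x y' disj'(2)] partner_partner[OF y] edge_sym
    unfolding x'_def y'_def by metis
  have cross: "E x' y \<longleftrightarrow> E x y'"
    using edge_partner_iff[OF x y disj] edge_sym unfolding x'_def y'_def by metis
  show "\<forall>u\<in>{x, twin x}. \<forall>w\<in>{y, twin y}. E u w \<longleftrightarrow> E x y"
    using twin_pairs_edge_iff[OF x y disj] .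
  show "\<forall>u\<in>{x', twin x'}. \<forall>w\<in>{y', twin y'}. E u w \<longleftrightarrow> E x y"
    using twin_pairs_edge_iff[OF x' y' disj'(1)] unfolding same .
  show "\<forall>u\<in>{x, twin x}. \<forall>w\<in>{y', twin y'}. E u w \<longleftrightarrow> E x y'"
    using twin_pairs_edge_iff[OF x y' disj'(2)] .
  show "\<forall>u\<in>{x', twin x'}. \<forall>w\<in>{y, twin y}. E u w \<longleftrightarrow> E x y'"
    using twin_pairs_edge_iff[OF x' y disj'(3)] unfolding cross .
qed

lemma num_edges_between_Cset:
  assumes x: "NA x" and y: "NA y" and Cne: "C x \<noteq> C y"
  shows "num_edges_between E (C x) (C y) \<in> {0, 8, 16}"
proof -
  have "num_edges_between E (C x) (C y) = 8 * (of_bool (E x y) + of_bool (E x (partner y)))"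
    unfolding Cset_eq
  proof (rule num_edges_between_blocks[OF _ _ _ _ _ _ _ edge_blocks[OF x y Cne]])
    show "({x, twin x} \<union> {partner x, twin (partner x)})
        \<inter> ({y, twin y} \<union> {partner y, twin (partner y)}) = {}"
      using Cset_disjoint[OF x y Cne] unfolding Cset_eq .
    show "{x, twin x} \<inter> {partner x, twin (partner x)} = {}"
      "{y, twin y} \<inter> {partner y, twin (partner y)} = {}"
      using twin_pairs_partner_disjoint[OF x] twin_pairs_partner_disjoint[OF y] .
    show "card {x, twin x} = 2" "card {y, twin y} = 2"
      "card {partner x, twin (partner x)} = 2" "card {partner y, twin (partner y)} = 2"
      using twin_neq[OF NA_in_V[OF x]] twin_neq[OF NA_in_V[OF y]]
        twin_neq[OF partner_in_V[OF x]] twin_neq[OF partner_in_V[OF y]] by auto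
  qed
  then show ?thesis
    by (cases "E x y"; cases "E x (partner y)") simp_all
qed

end

theorem lemma17:
  fixes V :: "'a set" and E :: "'a \<Rightarrow> 'a \<Rightarrow> bool" and n k a :: nat and x y :: 'a
  assumes deza: "deza_graph V E n k (k - 1) a"
    and k: "k > 1"
    and beta: "\<forall>v\<in>V. deza_beta V E (k - 1) v = 1"
    and x: "NA_vertex V E (k - 1) x" and y: "NA_vertex V E (k - 1) y"
    and Cne: "Cset V E (k - 1) x \<noteq> Cset V E (k - 1) y"
  defines "xb \<equiv> vb V E (k - 1) x" and "yb \<equiv> vb V E (k - 1) y"
    and "x' \<equiv> vprime V E (k - 1) x" and "y' \<equiv> vprime V E (k - 1) y"
    and "xb' \<equiv> vb V E (k - 1) (vprime V E (k - 1) x)"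
    and "yb' \<equiv> vb V E (k - 1) (vprime V E (k - 1) y)"
  shows "(some_edge E {x, xb} {y, yb} \<or> some_edge E {x', xb'} {y', yb'} \<longrightarrow>
            all_edges E {x, xb} {y, yb} \<and> all_edges E {x', xb'} {y', yb'})
       \<and> (some_edge E {x, xb} {y', yb'} \<or> some_edge E {x', xb'} {y, yb} \<longrightarrow>
            all_edges E {x, xb} {y', yb'} \<and> all_edges E {x', xb'} {y, yb})
       \<and> num_edges_between E (Cset V E (k - 1) x) (Cset V E (k - 1) y) \<in> {0, 8, 16}"
proof -
  interpret deza_beta_one V E n "k - 1" a
    using deza k beta by unfold_locales simp_all
  show ?thesis
    unfolding xb_def yb_def x'_def y'_def xb'_def yb'_def
    using some_edge_imp_all_edges[OF edge_blocks(1,2)[OF x y Cne]]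
      some_edge_imp_all_edges[OF edge_blocks(3,4)[OF x y Cne]]
      num_edges_between_Cset[OF x y Cne]
    by blast
qed

end
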